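(* Let $\tau=(\tau_j)_{j\in\mathbb N}$ be a renewal process with values in $\mathbb N$, $\tau_0=0$, defined on a probability space $(\Sigma,\mathcal E,\mathbf P)$ (i.e. $(\tau_i-\tau_{i-1})_{i\ge1}$ are i.i.d. positive random variables), and set $\delta_n=\mathbf 1_{\{n\in\tau\}}$. Let $\eta=(\eta_k)_{k\in\mathbb N}$ be i.i.d. real random variables on a probability space $(\Omega,\mathcal F,\mathbb P)$. Fix $\beta>0$ and $h\in\mathbb R$, assume $\mathbb E e^{\beta|\eta_0|}<\infty$, and let $\lambda(s)=\ln\mathbb E e^{s\eta_0}$. For $n\ge1$ let $$Z_n=\mathbf E\Big[\exp\Big(\sum_{k=1}^n(\beta\eta_k+h)\delta_k\Big)\delta_n\Big].$$ Set $K=2\max(e^{h+\lambda(\beta)},1)\cdot\max(e^{-h+\lambda(-\beta)},1)$. Then for every $n\ge1$ with $\mathbf P(n\in\tau)>0$, for both choices of sign $\pm$, $$\mathbb E\exp\big(\pm t(\ln Z_n-\mathbb E\ln Z_n)\big)\le \exp(nKt^2)\quad\text{for all }t\in[0,1],$$ and $$\mathbb P\Big(\pm\tfrac1n(\ln Z_n-\mathbb E\ln Z_n)>x\Big)\le\begin{cases}\exp\big(-\frac{nx^2}{4K}\big) & \text{if } x\in(0,2K],\\ \exp(-n(x-K)) & \text{if } x\in(2K,\infty).\end{cases}$$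
   Context: $\mathbf E$ denotes expectation with respect to $\mathbf P$ (over the renewal process, with $\eta$ fixed), and $\mathbb E$ denotes expectation with respect to $\mathbb P$ (over the disorder $\eta$). $Z_n$ is the partition function of the disordered pinning model. *)

theory Defs
  imports "HOL-Probability.Probability"
begin

text \<open>Renewal process built from its inter-arrival times T 0, T 1, ...
  (T i = tau_(i+1) - tau_i): tau_0 = 0, tau_j = T 0 + ... + T (j-1).\<close>
definition renewal_tau :: "(nat \<Rightarrow> 'a \<Rightarrow> nat) \<Rightarrow> nat \<Rightarrow> 'a \<Rightarrow> nat" where
  "renewal_tau T j \<omega> = (\<Sum>i<j. T i \<omega>)"

definition renewal_delta :: "(nat \<Rightarrow> 'a \<Rightarrow> nat) \<Rightarrow> nat \<Rightarrow> 'a \<Rightarrow> real" where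
  "renewal_delta T n \<omega> = (if \<exists>j. renewal_tau T j \<omega> = n then 1 else 0)"

definition pinning_Z ::
  "'a measure \<Rightarrow> (nat \<Rightarrow> 'a \<Rightarrow> nat) \<Rightarrow> (nat \<Rightarrow> 'b \<Rightarrow> real) \<Rightarrow> real \<Rightarrow> real \<Rightarrow> nat \<Rightarrow> 'b \<Rightarrow> real" where
  "pinning_Z M T \<eta> \<beta> h n x =
     (\<integral>\<omega>. exp (\<Sum>k=1..n. (\<beta> * \<eta> k x + h) * renewal_delta T k \<omega>) * renewal_delta T n \<omega> \<partial>M)"

end

theory Submission
  imports Defs
begin

text \<open>
  \<open>ln Z\<^sub>n\<close> is a function of the independent disorder variables \<open>\<eta>\<^sub>1, \<dots>, \<eta>\<^sub>n\<close>. Moving \<open>\<eta>\<^sub>k\<close> from the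
  reference value \<open>-h/\<beta>\<close> to \<open>v\<close> multiplies the weight of every trajectory by \<open>exp ((\<beta> v + h) \<delta>\<^sub>k)\<close>,
  so \<open>ln Z\<^sub>n\<close> has coordinatewise increments between \<open>L v = min (\<beta> v + h) 0\<close> and
  \<open>U v = max (\<beta> v + h) 0\<close>. For one such coordinate, symmetrisation together with
  \<open>cosh (t x) - 1 \<le> t\<^sup>2 (cosh x - 1)\<close> for \<open>|t| \<le> 1\<close> bounds the centred exponential moment by
  \<open>exp (t\<^sup>2 (E e\<^sup>U \<cdot> E e\<^sup>-\<^sup>L - 1))\<close>; integrating out the coordinates one at a time on the product
  space gives \<open>exp (n K t\<^sup>2)\<close>, as \<open>E e\<^sup>U \<cdot> E e\<^sup>-\<^sup>L - 1 \<le> K\<close>; Chernoff's bound at \<open>t = x / (2K)\<close> resp. \<open>t = 1\<close>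
  gives the tails.
\<close>

section \<open>Elementary inequalities\<close>

lemma sinh_mult_le:
  fixes t z :: real
  assumes "0 \<le> t" "t \<le> 1" "0 \<le> z"
  shows "sinh (t * z) \<le> t * sinh z"
proof -
  let ?g = "\<lambda>z. t * sinh z - sinh (t * z)"
  have "?g 0 \<le> ?g z"
  proof (rule DERIV_nonneg_imp_nondecreasing[OF assms(3)])
    fix x assume x: "0 \<le> x" "x \<le> z"
    have "(?g has_real_derivative t * (cosh x - cosh (t * x))) (at x)"
      by (auto intro!: derivative_eq_intros simp: algebra_simps)
    moreover have "cosh (t * x) \<le> cosh x"
      using assms x by (subst cosh_real_nonneg_le_iff) (auto simp: mult_left_le_one_le)
    ultimately show "\<exists>y. (?g has_real_derivative y) (at x) \<and> y \<ge> 0"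
      using assms by auto
  qed
  then show ?thesis by simp
qed

lemma abs_sinh_mult_le:
  fixes t z :: real
  assumes "\<bar>t\<bar> \<le> 1"
  shows "\<bar>sinh (t * z)\<bar> \<le> \<bar>t\<bar> * \<bar>sinh z\<bar>"
  using sinh_mult_le[of "\<bar>t\<bar>" "\<bar>z\<bar>"] assms by (simp flip: sinh_real_abs add: abs_mult)

lemma cosh_minus_one_eq: "cosh (x::real) - 1 = 2 * (sinh (x / 2))\<^sup>2"
  using cosh_double[of "x / 2"] cosh_square_eq[of "x / 2"] by simp

lemma cosh_mult_le:
  fixes t y :: real
  assumes "\<bar>t\<bar> \<le> 1"
  shows "cosh (t * y) \<le> 1 + t\<^sup>2 * (cosh y - 1)"
proof -
  have "\<bar>sinh (t * (y / 2))\<bar>\<^sup>2 \<le> (\<bar>t\<bar> * \<bar>sinh (y / 2)\<bar>)\<^sup>2"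
    using abs_sinh_mult_le[OF assms, of "y / 2"] by (intro power_mono) auto
  then have "(sinh (t * y / 2))\<^sup>2 \<le> t\<^sup>2 * (sinh (y / 2))\<^sup>2"
    by (simp add: power_mult_distrib)
  then show ?thesis
    using cosh_minus_one_eq[of "t * y"] cosh_minus_one_eq[of y] by (simp add: algebra_simps)
qed

lemma abs_le_exp_plus_exp_neg:
  fixes d l u :: real
  assumes "l \<le> d" "d \<le> u"
  shows "\<bar>d\<bar> \<le> exp u + exp (- l)"
proof -
  have "\<bar>d\<bar> \<le> exp \<bar>d\<bar>"
    using exp_ge_add_one_self[of "\<bar>d\<bar>"] by linarith
  also have "\<dots> \<le> exp u + exp (- l)"
    using assms by (cases "d \<ge> 0") (auto intro: add_increasing add_increasing2)
  finally show ?thesis .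
qed

lemma integrable_exp_abs:
  fixes \<phi> :: "'a \<Rightarrow> real"
  assumes [measurable]: "\<phi> \<in> borel_measurable M"
    and "integrable M (\<lambda>x. exp (\<phi> x))" "integrable M (\<lambda>x. exp (- \<phi> x))"
  shows "integrable M (\<lambda>x. exp \<bar>\<phi> x\<bar>)"
proof (rule Bochner_Integration.integrable_bound)
  show "integrable M (\<lambda>x. exp (\<phi> x) + exp (- \<phi> x))"
    using assms by simp
  have "exp \<bar>\<phi> x\<bar> \<le> exp (\<phi> x) + exp (- \<phi> x)" for x
    by (cases "\<phi> x \<ge> 0") (auto intro: add_increasing add_increasing2)
  then show "AE x in M. norm (exp \<bar>\<phi> x\<bar>) \<le> norm (exp (\<phi> x) + exp (- \<phi> x))"
    by (intro AE_I2) (simp add: add_pos_pos)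
qed simp

lemma integrable_exp_mult_of_abs:
  fixes \<phi> :: "'a \<Rightarrow> real"
  assumes [measurable]: "\<phi> \<in> borel_measurable M"
    and "integrable M (\<lambda>x. exp (c * \<bar>\<phi> x\<bar>))" and "\<bar>s\<bar> \<le> c"
  shows "integrable M (\<lambda>x. exp (s * \<phi> x))"
proof (rule Bochner_Integration.integrable_bound)
  have "s * \<phi> x \<le> c * \<bar>\<phi> x\<bar>" for x
    using abs_ge_self[of "s * \<phi> x"] mult_right_mono[OF assms(3) abs_ge_zero[of "\<phi> x"]]
    by (simp add: abs_mult)
  then show "AE x in M. norm (exp (s * \<phi> x)) \<le> norm (exp (c * \<bar>\<phi> x\<bar>))"
    by (intro AE_I2) simp
qed (use assms in simp_all)

lemma integrable_exp_mult:
  fixes \<phi> :: "'a \<Rightarrow> real"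
  assumes [measurable]: "\<phi> \<in> borel_measurable M"
    and "integrable M (\<lambda>x. exp (\<phi> x))" "integrable M (\<lambda>x. exp (- \<phi> x))" and "\<bar>s\<bar> \<le> 1"
  shows "integrable M (\<lambda>x. exp (s * \<phi> x))"
  using integrable_exp_mult_of_abs[of \<phi> M 1 s] integrable_exp_abs[of \<phi> M] assms by simp

lemma integrable_of_exp_abs:
  fixes \<phi> :: "'a \<Rightarrow> real"
  assumes [measurable]: "\<phi> \<in> borel_measurable M" and "integrable M (\<lambda>x. exp \<bar>\<phi> x\<bar>)"
  shows "integrable M \<phi>"
proof (rule Bochner_Integration.integrable_bound)
  show "AE x in M. norm (\<phi> x) \<le> norm (exp \<bar>\<phi> x\<bar>)"
    using exp_ge_add_one_self by (intro AE_I2) (smt (verit) real_norm_def)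
qed (use assms in simp_all)

lemma exp_cross_sum_le:
  fixes a b t :: real
  assumes "\<bar>t\<bar> \<le> 1"
  shows "exp (t * a) * exp (- t * b) + exp (- t * a) * exp (t * b)
           \<le> 2 + t\<^sup>2 * (exp a * exp (- b) + exp (- a) * exp b - 2)"
proof -
  have "cosh (t * (a - b)) \<le> 1 + t\<^sup>2 * (cosh (a - b) - 1)"
    by (rule cosh_mult_le[OF assms])
  then show ?thesis
    by (simp add: cosh_def exp_add[symmetric] algebra_simps)
qed

context prob_space
begin

lemma mgf_mult_mgf_neg_le:
  fixes \<phi> :: "'a \<Rightarrow> real"
  assumes [measurable]: "\<phi> \<in> borel_measurable M"
    and exp_int: "integrable M (\<lambda>x. exp (\<phi> x))" "integrable M (\<lambda>x. exp (- \<phi> x))"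
    and t: "\<bar>t\<bar> \<le> 1"
  shows "(\<integral>x. exp (t * \<phi> x) \<partial>M) * (\<integral>x. exp (- t * \<phi> x) \<partial>M)
           \<le> 1 + t\<^sup>2 * ((\<integral>x. exp (\<phi> x) \<partial>M) * (\<integral>x. exp (- \<phi> x) \<partial>M) - 1)"
proof -
  define m where "m s = (\<integral>x. exp (s * \<phi> x) \<partial>M)" for s
  have ie: "integrable M (\<lambda>x. exp (s * \<phi> x))" if "\<bar>s\<bar> \<le> 1" for s
    using integrable_exp_mult[OF _ exp_int that] by simp
  note ie_t = ie[OF t] ie[of "- t"] and ie_1 = ie[of 1] ie[of "- 1"]
  \<comment> \<open>Symmetrisation: integrate the pointwise bound over two independent copies \<open>v\<close> and \<open>w\<close>.\<close>
  have inner: "exp (t * \<phi> v) * m (- t) + exp (- t * \<phi> v) * m t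
      \<le> 2 + t\<^sup>2 * (exp (\<phi> v) * m (- 1) + exp (- \<phi> v) * m 1 - 2)" for v
  proof -
    have "(\<integral>w. exp (t * \<phi> v) * exp (- t * \<phi> w) + exp (- t * \<phi> v) * exp (t * \<phi> w) \<partial>M)
        \<le> (\<integral>w. 2 + t\<^sup>2 * (exp (\<phi> v) * exp (- \<phi> w) + exp (- \<phi> v) * exp (\<phi> w) - 2) \<partial>M)"
      using ie_t ie_1 t by (intro integral_mono exp_cross_sum_le) auto
    then show ?thesis
      using ie_t ie_1 t by (simp add: m_def prob_space)
  qed
  have "(\<integral>v. exp (t * \<phi> v) * m (- t) + exp (- t * \<phi> v) * m t \<partial>M)
      \<le> (\<integral>v. 2 + t\<^sup>2 * (exp (\<phi> v) * m (- 1) + exp (- \<phi> v) * m 1 - 2) \<partial>M)"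
    using ie_t ie_1 t by (intro integral_mono inner) auto
  then have "2 * (m t * m (- t)) \<le> 2 + t\<^sup>2 * (2 * (m 1 * m (- 1)) - 2)"
    using ie_t ie_1 t by (simp add: m_def prob_space algebra_simps)
  then show ?thesis
    by (simp add: m_def algebra_simps)
qed

lemma centered_mgf_le:
  fixes \<phi> :: "'a \<Rightarrow> real"
  assumes [measurable]: "\<phi> \<in> borel_measurable M"
    and exp_int: "integrable M (\<lambda>x. exp (\<phi> x))" "integrable M (\<lambda>x. exp (- \<phi> x))"
    and t: "\<bar>t\<bar> \<le> 1"
  shows "(\<integral>x. exp (t * (\<phi> x - expectation \<phi>)) \<partial>M)
           \<le> exp (t\<^sup>2 * ((\<integral>x. exp (\<phi> x) \<partial>M) * (\<integral>x. exp (- \<phi> x) \<partial>M) - 1))"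
proof -
  have ie: "integrable M (\<lambda>x. exp (s * \<phi> x))" if "\<bar>s\<bar> \<le> 1" for s
    using integrable_exp_mult[OF _ exp_int that] by simp
  have int_\<phi>: "integrable M \<phi>"
    using integrable_of_exp_abs[OF _ integrable_exp_abs[OF _ exp_int]] by simp
  have "exp (expectation (\<lambda>x. - t * \<phi> x)) \<le> expectation (\<lambda>x. exp (- t * \<phi> x))"
    using ie[of "- t"] t int_\<phi> by (intro jensens_inequality[where I=UNIV] exp_convex) auto
  then have jensen: "exp (- t * expectation \<phi>) \<le> (\<integral>x. exp (- t * \<phi> x) \<partial>M)"
    by simp
  have "(\<integral>x. exp (t * (\<phi> x - expectation \<phi>)) \<partial>M)
      = (\<integral>x. exp (t * \<phi> x) \<partial>M) * exp (- t * expectation \<phi>)"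
    by (simp add: algebra_simps exp_diff exp_minus field_simps)
  also have "\<dots> \<le> (\<integral>x. exp (t * \<phi> x) \<partial>M) * (\<integral>x. exp (- t * \<phi> x) \<partial>M)"
    using jensen by (intro mult_left_mono integral_nonneg_AE) auto
  also have "\<dots> \<le> 1 + t\<^sup>2 * ((\<integral>x. exp (\<phi> x) \<partial>M) * (\<integral>x. exp (- \<phi> x) \<partial>M) - 1)"
    by (rule mgf_mult_mgf_neg_le[OF _ exp_int t]) simp
  also have "\<dots> \<le> exp (t\<^sup>2 * ((\<integral>x. exp (\<phi> x) \<partial>M) * (\<integral>x. exp (- \<phi> x) \<partial>M) - 1))"
    by (rule exp_ge_add_one_self)
  finally show ?thesis .
qed

end

section \<open>Functions of independent coordinates with bounded increments\<close>

definition coordinate_increments_between ::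
  "'a measure \<Rightarrow> ('a \<Rightarrow> real) \<Rightarrow> ('a \<Rightarrow> real) \<Rightarrow> 'a \<Rightarrow> 'i set \<Rightarrow> (('i \<Rightarrow> 'a) \<Rightarrow> real) \<Rightarrow> bool"
where
  "coordinate_increments_between M L U u0 I F \<longleftrightarrow>
     (\<forall>k\<in>I. \<forall>x\<in>space (\<Pi>\<^sub>M i\<in>I. M). \<forall>v\<in>space M.
        L v \<le> F (x(k := v)) - F (x(k := u0)) \<and> F (x(k := v)) - F (x(k := u0)) \<le> U v)"

lemma fun_upd_in_space_PiM:
  "x \<in> space (\<Pi>\<^sub>M i\<in>J. M) \<Longrightarrow> v \<in> space M \<Longrightarrow> x(k := v) \<in> space (\<Pi>\<^sub>M i\<in>insert k J. M)"
  by (simp add: space_PiM PiE_fun_upd)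

lemma coordinate_increments_betweenD:
  assumes "coordinate_increments_between M L U u0 (insert k J) F"
    and "x \<in> space (\<Pi>\<^sub>M i\<in>J. M)" "v \<in> space M" "u0 \<in> space M"
  shows "L v \<le> F (x(k := v)) - F (x(k := u0))" "F (x(k := v)) - F (x(k := u0)) \<le> U v"
  using assms fun_upd_in_space_PiM[OF assms(2,4)]
  unfolding coordinate_increments_between_def by (metis fun_upd_upd insertI1)+

lemma coordinate_increments_between_freeze:
  assumes "coordinate_increments_between M L U u0 (insert k J) F" "k \<notin> J" "u0 \<in> space M"
  shows "coordinate_increments_between M L U u0 J (\<lambda>x. F (x(k := u0)))"
  unfolding coordinate_increments_between_def
proof (intro ballI)
  fix j x v assume j: "j \<in> J" and x: "x \<in> space (\<Pi>\<^sub>M i\<in>J. M)" and v: "v \<in> space M"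
  have "x(j := w, k := u0) = (x(k := u0))(j := w)" for w
    using j assms(2) by (auto simp: fun_upd_twist)
  then show "L v \<le> F (x(j := v, k := u0)) - F (x(j := u0, k := u0))
    \<and> F (x(j := v, k := u0)) - F (x(j := u0, k := u0)) \<le> U v"
    using assms(1) fun_upd_in_space_PiM[OF x assms(3)] j v
    unfolding coordinate_increments_between_def by auto
qed

context prob_space
begin

lemma coordinate_increments_between_integral:
  assumes F: "coordinate_increments_between M L U u0 (insert k J) F" and "k \<notin> J" "u0 \<in> space M"
    and int: "\<And>x. x \<in> space (\<Pi>\<^sub>M i\<in>J. M) \<Longrightarrow> integrable M (\<lambda>v. F (x(k := v)))"
  shows "coordinate_increments_between M L U u0 J (\<lambda>x. \<integral>w. F (x(k := w)) \<partial>M)"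
  unfolding coordinate_increments_between_def
proof (intro ballI)
  fix j x v assume j: "j \<in> J" and x: "x \<in> space (\<Pi>\<^sub>M i\<in>J. M)" and v: "v \<in> space M"
  have upd: "x(j := u) \<in> space (\<Pi>\<^sub>M i\<in>J. M)" if "u \<in> space M" for u
    using fun_upd_in_space_PiM[OF x that, of j] j by (simp add: insert_absorb)
  define D where "D w = F (x(j := v, k := w)) - F (x(j := u0, k := w))" for w
  have "(\<integral>w. F (x(j := v, k := w)) \<partial>M) - (\<integral>w. F (x(j := u0, k := w)) \<partial>M) = (\<integral>w. D w \<partial>M)"
    unfolding D_def using int[OF upd[OF v]] int[OF upd[OF assms(3)]] by simp
  moreover have "L v \<le> D w \<and> D w \<le> U v" if "w \<in> space M" for w
  proof -
    have "x(j := u, k := w) = (x(k := w))(j := u)" for u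
      using j assms(2) by (auto simp: fun_upd_twist)
    then show ?thesis
      using F fun_upd_in_space_PiM[OF x that] j v
      unfolding coordinate_increments_between_def D_def by auto
  qed
  moreover have "integrable M D"
    unfolding D_def using int[OF upd[OF v]] int[OF upd[OF assms(3)]] by simp
  ultimately show "L v \<le> (\<integral>w. F (x(j := v, k := w)) \<partial>M) - (\<integral>w. F (x(j := u0, k := w)) \<partial>M)
    \<and> (\<integral>w. F (x(j := v, k := w)) \<partial>M) - (\<integral>w. F (x(j := u0, k := w)) \<partial>M) \<le> U v"
    using integral_mono[of M "\<lambda>_. L v" D] integral_mono[of M D "\<lambda>_. U v"] by (simp add: prob_space)
qed

lemma centered_mgf_le_of_bounds:
  fixes \<phi> :: "'a \<Rightarrow> real"
  assumes [measurable]: "\<phi> \<in> borel_measurable M"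
    and bnd: "\<And>v. v \<in> space M \<Longrightarrow> L v \<le> \<phi> v \<and> \<phi> v \<le> U v"
    and iU: "integrable M (\<lambda>v. exp (U v))" and iL: "integrable M (\<lambda>v. exp (- L v))"
    and t: "\<bar>t\<bar> \<le> 1"
  shows "integrable M (\<lambda>v. exp (t * (\<phi> v - expectation \<phi>)))"
    and "(\<integral>v. exp (t * (\<phi> v - expectation \<phi>)) \<partial>M)
           \<le> exp (t\<^sup>2 * ((\<integral>v. exp (U v) \<partial>M) * (\<integral>v. exp (- L v) \<partial>M) - 1))"
proof -
  have ie: "integrable M (\<lambda>v. exp (\<phi> v))" "integrable M (\<lambda>v. exp (- \<phi> v))"
    using bnd by (auto intro!: Bochner_Integration.integrable_bound[OF iU, of "\<lambda>v. exp (\<phi> v)"]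
        Bochner_Integration.integrable_bound[OF iL, of "\<lambda>v. exp (- \<phi> v)"] AE_I2)
  have "integrable M (\<lambda>v. exp (t * \<phi> v) * exp (- t * expectation \<phi>))"
    using integrable_exp_mult[OF _ ie t] by simp
  then show "integrable M (\<lambda>v. exp (t * (\<phi> v - expectation \<phi>)))"
    by (simp add: exp_add[symmetric] algebra_simps)
  have "(\<integral>v. exp (\<phi> v) \<partial>M) * (\<integral>v. exp (- \<phi> v) \<partial>M) \<le> (\<integral>v. exp (U v) \<partial>M) * (\<integral>v. exp (- L v) \<partial>M)"
    using ie iU iL bnd by (intro mult_mono integral_mono_AE integral_nonneg_AE AE_I2) auto
  then have "t\<^sup>2 * ((\<integral>v. exp (\<phi> v) \<partial>M) * (\<integral>v. exp (- \<phi> v) \<partial>M) - 1)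
      \<le> t\<^sup>2 * ((\<integral>v. exp (U v) \<partial>M) * (\<integral>v. exp (- L v) \<partial>M) - 1)"
    by (intro mult_left_mono) auto
  then show "(\<integral>v. exp (t * (\<phi> v - expectation \<phi>)) \<partial>M)
           \<le> exp (t\<^sup>2 * ((\<integral>v. exp (U v) \<partial>M) * (\<integral>v. exp (- L v) \<partial>M) - 1))"
    using centered_mgf_le[OF assms(1) ie t] by (meson exp_le_cancel_iff order.trans)
qed

lemma borel_measurable_integral_coordinate:
  fixes F :: "('i \<Rightarrow> 'a) \<Rightarrow> real"
  assumes "F \<in> borel_measurable (\<Pi>\<^sub>M i\<in>insert k J. M)"
  shows "(\<lambda>x. \<integral>v. F (x(k := v)) \<partial>M) \<in> borel_measurable (\<Pi>\<^sub>M i\<in>J. M)"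
proof -
  have "(\<lambda>(x, v). F (x(k := v))) \<in> borel_measurable ((\<Pi>\<^sub>M i\<in>J. M) \<Otimes>\<^sub>M M)"
    using measurable_compose[OF measurable_add_dim assms] by (simp add: case_prod_beta')
  then show ?thesis
    using borel_measurable_lebesgue_integral[of "\<lambda>x v. F (x(k := v))"] by simp
qed

lemma borel_measurable_freeze_coordinate:
  fixes F :: "('i \<Rightarrow> 'a) \<Rightarrow> real"
  assumes "F \<in> borel_measurable (\<Pi>\<^sub>M i\<in>insert k J. M)" "u0 \<in> space M"
  shows "(\<lambda>x. F (x(k := u0))) \<in> borel_measurable (\<Pi>\<^sub>M i\<in>J. M)"
proof -
  have "(\<lambda>x. (x, u0)) \<in> measurable (\<Pi>\<^sub>M i\<in>J. M) ((\<Pi>\<^sub>M i\<in>J. M) \<Otimes>\<^sub>M M)"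
    using assms(2) by measurable
  from measurable_compose[OF measurable_compose[OF this measurable_add_dim] assms(1)]
  show ?thesis by simp
qed

lemma integrable_coordinate_section:
  assumes Fm: "F \<in> borel_measurable (\<Pi>\<^sub>M i\<in>insert k J. M)"
    and F: "coordinate_increments_between M L U u0 (insert k J) F" and "k \<notin> J" "u0 \<in> space M"
    and iU: "integrable M (\<lambda>v. exp (U v))" and iL: "integrable M (\<lambda>v. exp (- L v))"
    and x: "x \<in> space (\<Pi>\<^sub>M i\<in>J. M)"
  shows "integrable M (\<lambda>v. F (x(k := v)))"
proof (rule Bochner_Integration.integrable_bound)
  show "integrable M (\<lambda>v. \<bar>F (x(k := u0))\<bar> + (exp (U v) + exp (- L v)))"
    using iU iL by simp
  show "(\<lambda>v. F (x(k := v))) \<in> borel_measurable M"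
    using measurable_compose[OF measurable_component_update[OF x \<open>k \<notin> J\<close>] Fm] by simp
  have "\<bar>F (x(k := v)) - F (x(k := u0))\<bar> \<le> exp (U v) + exp (- L v)" if "v \<in> space M" for v
    using coordinate_increments_betweenD[OF F x that \<open>u0 \<in> space M\<close>] by (rule abs_le_exp_plus_exp_neg)
  then show "AE v in M. norm (F (x(k := v))) \<le> norm (\<bar>F (x(k := u0))\<bar> + (exp (U v) + exp (- L v)))"
    by (intro AE_I2) (smt (verit) real_norm_def exp_gt_zero)
qed

lemma product_sigma_finite_const: "product_sigma_finite (\<lambda>_. M)"
  by (simp add: product_sigma_finite_def prob_space_imp_sigma_finite prob_space_axioms)

lemma integrable_PiM_insert_of_frozen:
  fixes F :: "('i \<Rightarrow> 'a) \<Rightarrow> real"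
  assumes "finite J" "k \<notin> J" and Fm: "F \<in> borel_measurable (\<Pi>\<^sub>M i\<in>insert k J. M)"
    and F: "coordinate_increments_between M L U u0 (insert k J) F" and u0: "u0 \<in> space M"
    and iU: "integrable M (\<lambda>v. exp (U v))" and iL: "integrable M (\<lambda>v. exp (- L v))"
    and frozen: "integrable (\<Pi>\<^sub>M i\<in>J. M) (\<lambda>x. F (x(k := u0)))"
  shows "integrable (\<Pi>\<^sub>M i\<in>insert k J. M) F"
  unfolding integrable_iff_bounded
proof
  interpret product_sigma_finite "\<lambda>_. M" by (rule product_sigma_finite_const)
  interpret PJ: prob_space "\<Pi>\<^sub>M i\<in>J. M" by (rule prob_space_PiM) (rule prob_space_axioms)
  define B where "B v = exp (U v) + exp (- L v)" for v
  have "(\<integral>\<^sup>+ y. ennreal (norm (F y)) \<partial>\<Pi>\<^sub>M i\<in>insert k J. M)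
      = (\<integral>\<^sup>+ x. \<integral>\<^sup>+ v. ennreal (norm (F (x(k := v)))) \<partial>M \<partial>\<Pi>\<^sub>M i\<in>J. M)"
    using assms(1,2) Fm by (subst product_nn_integral_insert) auto
  also have "\<dots> \<le> (\<integral>\<^sup>+ x. \<integral>\<^sup>+ v. ennreal \<bar>F (x(k := u0))\<bar> + ennreal (B v) \<partial>M \<partial>\<Pi>\<^sub>M i\<in>J. M)"
  proof (intro nn_integral_mono)
    fix x v assume x: "x \<in> space (\<Pi>\<^sub>M i\<in>J. M)" and v: "v \<in> space M"
    have "\<bar>F (x(k := v)) - F (x(k := u0))\<bar> \<le> B v"
      using coordinate_increments_betweenD[OF F x v u0] unfolding B_def by (rule abs_le_exp_plus_exp_neg)
    then show "ennreal (norm (F (x(k := v)))) \<le> ennreal \<bar>F (x(k := u0))\<bar> + ennreal (B v)"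
      by (simp add: ennreal_plus[symmetric] B_def del: ennreal_plus)
  qed
  also have "\<dots> = (\<integral>\<^sup>+ x. ennreal (norm (F (x(k := u0)))) \<partial>\<Pi>\<^sub>M i\<in>J. M) + (\<integral>\<^sup>+ v. ennreal (B v) \<partial>M)"
    using iU iL borel_measurable_freeze_coordinate[OF Fm u0]
    by (simp add: B_def nn_integral_add emeasure_space_1 PJ.emeasure_space_1)
  also have "\<dots> < \<infinity>"
  proof -
    have "integrable M B"
      using iU iL unfolding B_def[abs_def] by simp
    moreover have "norm (B v) = B v" for v
      by (simp add: B_def add_pos_pos)
    ultimately show ?thesis
      using frozen unfolding integrable_iff_bounded by simp
  qed
  finally show "(\<integral>\<^sup>+ y. ennreal (norm (F y)) \<partial>\<Pi>\<^sub>M i\<in>insert k J. M) < \<infinity>" .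
qed fact

lemma nn_integral_exp_section_le:
  fixes F :: "('i \<Rightarrow> 'a) \<Rightarrow> real"
  assumes Fm: "F \<in> borel_measurable (\<Pi>\<^sub>M i\<in>insert k J. M)"
    and F: "coordinate_increments_between M L U u0 (insert k J) F" and "k \<notin> J" and u0: "u0 \<in> space M"
    and iU: "integrable M (\<lambda>v. exp (U v))" and iL: "integrable M (\<lambda>v. exp (- L v))"
    and t: "\<bar>t\<bar> \<le> 1" and x: "x \<in> space (\<Pi>\<^sub>M i\<in>J. M)"
  shows "(\<integral>\<^sup>+ v. ennreal (exp (t * (F (x(k := v)) - c))) \<partial>M)
    \<le> ennreal (exp (t * ((\<integral>v. F (x(k := v)) \<partial>M) - c)))
      * ennreal (exp (((\<integral>v. exp (U v) \<partial>M) * (\<integral>v. exp (- L v) \<partial>M) - 1) * t\<^sup>2))"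
proof -
  define G where "G = (\<integral>v. F (x(k := v)) \<partial>M)"
  define \<psi> where "\<psi> v = F (x(k := v)) - F (x(k := u0))" for v
  have int_section: "integrable M (\<lambda>v. F (x(k := v)))"
    by (rule integrable_coordinate_section[OF Fm F \<open>k \<notin> J\<close> u0 iU iL x])
  then have [measurable]: "\<psi> \<in> borel_measurable M"
    unfolding \<psi>_def by simp
  have bnd: "L v \<le> \<psi> v \<and> \<psi> v \<le> U v" if "v \<in> space M" for v
    using coordinate_increments_betweenD[OF F x that u0] unfolding \<psi>_def by blast
  have "expectation \<psi> = G - F (x(k := u0))"
    unfolding \<psi>_def[abs_def] G_def using int_section by (simp add: prob_space)
  then have shift: "t * (F (x(k := v)) - c) = t * (G - c) + t * (\<psi> v - expectation \<psi>)" for v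
    by (simp add: \<psi>_def algebra_simps)
  note mgf = centered_mgf_le_of_bounds[OF _ bnd iU iL t]
  have "(\<integral>\<^sup>+ v. ennreal (exp (t * (F (x(k := v)) - c))) \<partial>M)
      = ennreal (exp (t * (G - c))) * (\<integral>\<^sup>+ v. ennreal (exp (t * (\<psi> v - expectation \<psi>))) \<partial>M)"
    unfolding shift exp_add ennreal_mult'[OF exp_ge_zero] using mgf(1)
    by (simp add: ennreal_mult nn_integral_cmult)
  also have "\<dots> \<le> ennreal (exp (t * (G - c)))
      * ennreal (exp (((\<integral>v. exp (U v) \<partial>M) * (\<integral>v. exp (- L v) \<partial>M) - 1) * t\<^sup>2))"
    using mgf by (intro mult_left_mono) (auto simp: nn_integral_eq_integral mult.commute)
  finally show ?thesis
    unfolding G_def .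
qed

lemma centered_mgf_PiM_le:
  fixes F :: "('i \<Rightarrow> 'a) \<Rightarrow> real"
  assumes "finite I" and u0: "u0 \<in> space M"
    and iU: "integrable M (\<lambda>v. exp (U v))" and iL: "integrable M (\<lambda>v. exp (- L v))"
    and t: "\<bar>t\<bar> \<le> 1"
    and "F \<in> borel_measurable (\<Pi>\<^sub>M i\<in>I. M)" and "coordinate_increments_between M L U u0 I F"
  defines "\<kappa> \<equiv> (\<integral>v. exp (U v) \<partial>M) * (\<integral>v. exp (- L v) \<partial>M) - 1"
  shows "integrable (\<Pi>\<^sub>M i\<in>I. M) F
    \<and> (\<integral>\<^sup>+ x. ennreal (exp (t * (F x - (\<integral>y. F y \<partial>\<Pi>\<^sub>M i\<in>I. M)))) \<partial>\<Pi>\<^sub>M i\<in>I. M)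
        \<le> ennreal (exp (real (card I) * \<kappa> * t\<^sup>2))"
  using assms(1,6,7)
proof (induction I arbitrary: F rule: finite_induct)
  case empty
  then show ?case
    by (simp add: PiM_empty integrable_count_space nn_integral_count_space_finite
        lebesgue_integral_count_space_finite)
next
  case (insert k J)
  interpret product_sigma_finite "\<lambda>_. M" by (rule product_sigma_finite_const)
  note Fm[measurable] = insert.prems(1) and F = insert.prems(2)
  have int_section: "integrable M (\<lambda>v. F (x(k := v)))" if "x \<in> space (\<Pi>\<^sub>M i\<in>J. M)" for x
    by (rule integrable_coordinate_section[OF Fm F insert.hyps(2) u0 iU iL that])
  define G where "G x = (\<integral>v. F (x(k := v)) \<partial>M)" for x
  have Gm[measurable]: "G \<in> borel_measurable (\<Pi>\<^sub>M i\<in>J. M)"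
    unfolding G_def[abs_def] by (rule borel_measurable_integral_coordinate[OF Fm])
  have IH_G: "integrable (\<Pi>\<^sub>M i\<in>J. M) G"
    "(\<integral>\<^sup>+ x. ennreal (exp (t * (G x - (\<integral>y. G y \<partial>\<Pi>\<^sub>M i\<in>J. M)))) \<partial>\<Pi>\<^sub>M i\<in>J. M)
       \<le> ennreal (exp (real (card J) * \<kappa> * t\<^sup>2))"
    using insert.IH[OF Gm] coordinate_increments_between_integral[OF F insert.hyps(2) u0 int_section]
    unfolding G_def by auto
  have "integrable (\<Pi>\<^sub>M i\<in>J. M) (\<lambda>x. F (x(k := u0)))"
    using insert.IH borel_measurable_freeze_coordinate[OF Fm u0]
      coordinate_increments_between_freeze[OF F insert.hyps(2) u0] by blast
  then have intF: "integrable (\<Pi>\<^sub>M i\<in>insert k J. M) F"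
    by (rule integrable_PiM_insert_of_frozen[OF insert.hyps Fm F u0 iU iL])
  define c where "c = (\<integral>y. F y \<partial>\<Pi>\<^sub>M i\<in>insert k J. M)"
  have c_eq: "c = (\<integral>x. G x \<partial>\<Pi>\<^sub>M i\<in>J. M)"
    unfolding c_def G_def by (rule product_integral_insert[OF insert.hyps intF])
  have section_mgf: "(\<integral>\<^sup>+ v. ennreal (exp (t * (F (x(k := v)) - c))) \<partial>M)
      \<le> ennreal (exp (t * (G x - c))) * ennreal (exp (\<kappa> * t\<^sup>2))" if "x \<in> space (\<Pi>\<^sub>M i\<in>J. M)" for x
    unfolding G_def \<kappa>_def by (rule nn_integral_exp_section_le[OF Fm F insert.hyps(2) u0 iU iL t that])
  have "(\<integral>\<^sup>+ y. ennreal (exp (t * (F y - c))) \<partial>\<Pi>\<^sub>M i\<in>insert k J. M)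
      = (\<integral>\<^sup>+ x. \<integral>\<^sup>+ v. ennreal (exp (t * (F (x(k := v)) - c))) \<partial>M \<partial>\<Pi>\<^sub>M i\<in>J. M)"
    using insert.hyps by (subst product_nn_integral_insert) auto
  also have "\<dots> \<le> (\<integral>\<^sup>+ x. ennreal (exp (t * (G x - c))) \<partial>\<Pi>\<^sub>M i\<in>J. M) * ennreal (exp (\<kappa> * t\<^sup>2))"
    using section_mgf by (subst nn_integral_multc[symmetric]) (auto intro!: nn_integral_mono)
  also have "\<dots> \<le> ennreal (exp (real (card J) * \<kappa> * t\<^sup>2)) * ennreal (exp (\<kappa> * t\<^sup>2))"
    using IH_G(2) unfolding c_eq by (intro mult_right_mono) auto
  also have "\<dots> = ennreal (exp (real (card (insert k J)) * \<kappa> * t\<^sup>2))"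
    using insert.hyps by (simp add: ennreal_mult[symmetric] exp_add[symmetric] algebra_simps)
  finally show ?case
    using intF unfolding c_def by blast
qed

end

section \<open>Tail bounds\<close>

lemma (in prob_space) measure_gt_le_nn_integral_exp:
  fixes g :: "'a \<Rightarrow> real"
  assumes [measurable]: "g \<in> borel_measurable M" and "s > 0" "B \<ge> 0"
    and mgf: "(\<integral>\<^sup>+ x. ennreal (exp (s * g x)) \<partial>M) \<le> ennreal B"
  shows "measure M {x \<in> space M. g x > a} \<le> B * exp (- s * a)"
proof -
  have "emeasure M {x \<in> space M. g x > a} \<le> emeasure M {x \<in> space M. g x \<ge> a}"
    by (intro emeasure_mono) auto
  also have "\<dots> \<le> ennreal (exp (- s * a)) * (\<integral>\<^sup>+ x. ennreal (exp (s * g x)) * indicator (space M) x \<partial>M)"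
    using \<open>s > 0\<close> by (intro Chernoff_ineq_nn_integral_ge) auto
  also have "(\<integral>\<^sup>+ x. ennreal (exp (s * g x)) * indicator (space M) x \<partial>M)
      = (\<integral>\<^sup>+ x. ennreal (exp (s * g x)) \<partial>M)"
    by (intro nn_integral_cong) simp
  also have "ennreal (exp (- s * a)) * \<dots> \<le> ennreal (exp (- s * a)) * ennreal B"
    using mgf by (rule mult_left_mono) simp
  finally show ?thesis
    using \<open>B \<ge> 0\<close> by (simp add: emeasure_eq_measure ennreal_mult'[symmetric] mult.commute)
qed

lemma (in prob_space) tail_bounds_of_mgf:
  fixes d :: "'a \<Rightarrow> real" and n K \<sigma> :: real
  assumes [measurable]: "d \<in> borel_measurable M" and n: "n > 0" and K: "K > 0"
    and mgf: "\<And>t. t \<in> {0..1} \<Longrightarrow>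
      (\<integral>\<^sup>+ x. ennreal (exp (\<sigma> * t * d x)) \<partial>M) \<le> ennreal (exp (n * K * t\<^sup>2))"
  shows "0 < y \<Longrightarrow> y \<le> 2 * K \<Longrightarrow>
      measure M {x \<in> space M. \<sigma> * (1 / n) * d x > y} \<le> exp (- n * y\<^sup>2 / (4 * K))"
    and "measure M {x \<in> space M. \<sigma> * (1 / n) * d x > y} \<le> exp (- n * (y - K))"
proof -
  have chernoff: "measure M {x \<in> space M. \<sigma> * (1 / n) * d x > y} \<le> exp (n * K * t\<^sup>2 - n * t * y)"
    if "0 < t" "t \<le> 1" for t
  proof -
    have "(\<integral>\<^sup>+ x. ennreal (exp ((n * t) * (\<sigma> * (1 / n) * d x))) \<partial>M) \<le> ennreal (exp (n * K * t\<^sup>2))"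
      using mgf[of t] that n by (simp add: field_simps)
    then have "measure M {x \<in> space M. \<sigma> * (1 / n) * d x > y} \<le> exp (n * K * t\<^sup>2) * exp (- (n * t) * y)"
      using that n by (intro measure_gt_le_nn_integral_exp) auto
    then show ?thesis
      by (simp add: exp_diff exp_minus field_simps)
  qed
  show "measure M {x \<in> space M. \<sigma> * (1 / n) * d x > y} \<le> exp (- n * y\<^sup>2 / (4 * K))"
    if "0 < y" "y \<le> 2 * K"
  proof -
    have "n * K * (y / (2 * K))\<^sup>2 - n * (y / (2 * K)) * y = - n * y\<^sup>2 / (4 * K)"
      using K by (simp add: field_simps power2_eq_square)
    then show ?thesis
      using chernoff[of "y / (2 * K)"] that K by simp
  qed
  show "measure M {x \<in> space M. \<sigma> * (1 / n) * d x > y} \<le> exp (- n * (y - K))"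
    using chernoff[of 1] by (simp add: algebra_simps)
qed

lemma mult_minus_one_le_two_max_mult_max:
  fixes a b q A B :: real
  assumes "0 \<le> q" "q \<le> 1" "0 \<le> A" "0 \<le> B" "A \<le> a + q" "B \<le> b + (1 - q)"
  shows "A * B - 1 \<le> 2 * max a 1 * max b 1"
proof -
  define a' b' where "a' = max a 1" and "b' = max b 1"
  have a': "1 \<le> a'" "a \<le> a'" and b': "1 \<le> b'" "b \<le> b'"
    unfolding a'_def b'_def by auto
  have "A * B \<le> (a' + q) * (b' + (1 - q))"
    using assms a' b' by (intro mult_mono) auto
  also have "\<dots> = a' * b' + (a' * (1 - q) + q * b') + q * (1 - q)"
    by (simp add: algebra_simps)
  also have "a' * (1 - q) + q * b' \<le> a' * b'"
  proof -
    have "a' * (1 - q) \<le> a' * b' * (1 - q)" "q * b' \<le> q * (a' * b')"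
      using a' b' assms by (auto intro!: mult_right_mono mult_left_mono simp: mult_le_cancel_left1 mult_le_cancel_right1)
    then show ?thesis
      by (simp add: algebra_simps)
  qed
  also have "q * (1 - q) \<le> 1"
    using assms by (simp add: mult_le_one)
  finally show ?thesis
    unfolding a'_def b'_def by simp
qed

context prob_space
begin

lemma integral_exp_pos:
  fixes f :: "'a \<Rightarrow> real"
  assumes "integrable M (\<lambda>x. exp (f x))"
  shows "0 < (\<integral>x. exp (f x) \<partial>M)"
  using integral_less_AE_space[of "\<lambda>_. 0" "\<lambda>x. exp (f x)"] assms by (simp add: emeasure_space_1)

lemma integral_exp_max_zero_le:
  fixes w :: "'a \<Rightarrow> real"
  assumes [measurable]: "w \<in> borel_measurable M" "A \<in> sets M"
    and int: "integrable M (\<lambda>x. exp (w x))" and neg: "\<And>x. x \<in> space M \<Longrightarrow> w x < 0 \<Longrightarrow> x \<in> A"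
  shows "integrable M (\<lambda>x. exp (max (w x) 0))"
    and "(\<integral>x. exp (max (w x) 0) \<partial>M) \<le> (\<integral>x. exp (w x) \<partial>M) + prob A"
proof -
  have le: "exp (max (w x) 0) \<le> exp (w x) + indicator A x" if "x \<in> space M" for x
    using neg[OF that] by (cases "w x < 0") (auto simp: indicator_def max_def)
  have int_A: "integrable M (indicator A :: 'a \<Rightarrow> real)"
    by (intro integrable_real_indicator) (simp_all add: less_top[symmetric])
  then have int_sum: "integrable M (\<lambda>x. exp (w x) + indicator A x)"
    using int by simp
  show int_max: "integrable M (\<lambda>x. exp (max (w x) 0))"
  proof (rule Bochner_Integration.integrable_bound[OF int_sum])
    show "AE x in M. norm (exp (max (w x) 0)) \<le> norm (exp (w x) + indicator A x)"
      using le by (intro AE_I2) (simp add: add_nonneg_nonneg)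
  qed simp
  have "(\<integral>x. exp (max (w x) 0) \<partial>M) \<le> (\<integral>x. exp (w x) + indicator A x \<partial>M)"
    using le int_sum int_max by (intro integral_mono) auto
  also have "\<dots> = (\<integral>x. exp (w x) \<partial>M) + prob A"
    using int_A int by simp
  finally show "(\<integral>x. exp (max (w x) 0) \<partial>M) \<le> (\<integral>x. exp (w x) \<partial>M) + prob A" .
qed

lemma exp_max_times_exp_neg_min_le:
  fixes \<xi> :: "'a \<Rightarrow> real"
  assumes [measurable]: "\<xi> \<in> borel_measurable M"
    and int_abs: "integrable M (\<lambda>x. exp (\<beta> * \<bar>\<xi> x\<bar>))" and "\<beta> \<ge> 0"
  shows "integrable M (\<lambda>x. exp (max (\<beta> * \<xi> x + h) 0))"
    and "integrable M (\<lambda>x. exp (- min (\<beta> * \<xi> x + h) 0))"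
    and "(\<integral>x. exp (max (\<beta> * \<xi> x + h) 0) \<partial>M) * (\<integral>x. exp (- min (\<beta> * \<xi> x + h) 0) \<partial>M) - 1
      \<le> 2 * max (exp (h + ln (\<integral>x. exp (\<beta> * \<xi> x) \<partial>M))) 1
          * max (exp (- h + ln (\<integral>x. exp ((- \<beta>) * \<xi> x) \<partial>M))) 1"
proof -
  have int_pos: "integrable M (\<lambda>x. exp (\<beta> * \<xi> x))" and int_neg: "integrable M (\<lambda>x. exp ((- \<beta>) * \<xi> x))"
    using integrable_exp_mult_of_abs[OF _ int_abs, of \<beta>] integrable_exp_mult_of_abs[OF _ int_abs, of "- \<beta>"]
      \<open>\<beta> \<ge> 0\<close> by simp_all
  define A where "A = {x \<in> space M. \<beta> * \<xi> x + h < 0}"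
  have A[measurable]: "A \<in> sets M"
    unfolding A_def by measurable
  have int_shift: "integrable M (\<lambda>x. exp (\<beta> * \<xi> x + h))" "integrable M (\<lambda>x. exp (- (\<beta> * \<xi> x + h)))"
    using int_pos int_neg by (simp_all add: exp_add exp_diff)
  have neg_min: "exp (- min (\<beta> * \<xi> x + h) 0) = exp (max (- (\<beta> * \<xi> x + h)) 0)" for x
    by (simp add: max_def min_def)
  note pos = integral_exp_max_zero_le[of "\<lambda>x. \<beta> * \<xi> x + h" A, OF _ A int_shift(1)]
  note neg = integral_exp_max_zero_le[of "\<lambda>x. - (\<beta> * \<xi> x + h)" "space M - A", OF _ _ int_shift(2)]
  show "integrable M (\<lambda>x. exp (max (\<beta> * \<xi> x + h) 0))" "integrable M (\<lambda>x. exp (- min (\<beta> * \<xi> x + h) 0))"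
    using pos(1) neg(1) unfolding neg_min by (auto simp: A_def)
  have "(\<integral>x. exp (max (\<beta> * \<xi> x + h) 0) \<partial>M) \<le> exp (h + ln (\<integral>x. exp (\<beta> * \<xi> x) \<partial>M)) + prob A"
    using pos(2) integral_exp_pos[OF int_pos] by (simp add: A_def exp_add mult.commute)
  moreover have "(\<integral>x. exp (- min (\<beta> * \<xi> x + h) 0) \<partial>M)
      \<le> exp (- h + ln (\<integral>x. exp ((- \<beta>) * \<xi> x) \<partial>M)) + (1 - prob A)"
    using neg(2) integral_exp_pos[OF int_neg] prob_compl[OF A]
    unfolding neg_min by (simp add: A_def exp_add exp_diff)
  ultimately show "(\<integral>x. exp (max (\<beta> * \<xi> x + h) 0) \<partial>M) * (\<integral>x. exp (- min (\<beta> * \<xi> x + h) 0) \<partial>M) - 1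
      \<le> 2 * max (exp (h + ln (\<integral>x. exp (\<beta> * \<xi> x) \<partial>M))) 1
          * max (exp (- h + ln (\<integral>x. exp ((- \<beta>) * \<xi> x) \<partial>M))) 1"
    by (intro mult_minus_one_le_two_max_mult_max integral_nonneg_AE) auto
qed

end

section \<open>The disordered pinning model\<close>

lemma renewal_delta_cases: "renewal_delta T k \<omega> = 0 \<or> renewal_delta T k \<omega> = 1"
  by (simp add: renewal_delta_def)

lemma borel_measurable_renewal_delta[measurable]:
  assumes [measurable]: "\<And>i. T i \<in> measurable M (count_space UNIV)"
  shows "renewal_delta T k \<in> borel_measurable M"
proof -
  have [measurable]: "(\<lambda>\<omega>. real (T i \<omega>)) \<in> borel_measurable M" for i
    using measurable_compose[OF assms measurable_count_space[of real]] by simp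
  have "renewal_delta T k = (\<lambda>\<omega>. if \<exists>j. (\<Sum>i<j. real (T i \<omega>)) = real k then 1 else 0)"
    unfolding renewal_delta_def renewal_tau_def by (intro ext) (simp flip: of_nat_sum)
  then show ?thesis
    by simp
qed

definition pinning_weight :: "(nat \<Rightarrow> 'a \<Rightarrow> nat) \<Rightarrow> real \<Rightarrow> real \<Rightarrow> nat \<Rightarrow> (nat \<Rightarrow> real) \<Rightarrow> 'a \<Rightarrow> real"
where
  "pinning_weight T \<beta> h n y \<omega> =
     exp (\<Sum>k=1..n. (\<beta> * y k + h) * renewal_delta T k \<omega>) * renewal_delta T n \<omega>"

lemma pinning_Z_eq_integral_weight:
  "pinning_Z M T \<eta> \<beta> h n x = (\<integral>\<omega>. pinning_weight T \<beta> h n (\<lambda>k. \<eta> k x) \<omega> \<partial>M)"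
  by (simp add: pinning_Z_def pinning_weight_def)

lemma pinning_weight_bounds:
  "exp (- (\<Sum>k=1..n. \<bar>\<beta> * y k + h\<bar>)) * renewal_delta T n \<omega> \<le> pinning_weight T \<beta> h n y \<omega>"
  "pinning_weight T \<beta> h n y \<omega> \<le> exp (\<Sum>k=1..n. \<bar>\<beta> * y k + h\<bar>)"
proof -
  have "\<bar>\<Sum>k=1..n. (\<beta> * y k + h) * renewal_delta T k \<omega>\<bar> \<le> (\<Sum>k=1..n. \<bar>\<beta> * y k + h\<bar>)"
  proof (rule order.trans[OF sum_abs sum_mono])
    show "\<bar>(\<beta> * y k + h) * renewal_delta T k \<omega>\<bar> \<le> \<bar>\<beta> * y k + h\<bar>" for k
      using renewal_delta_cases[of T k \<omega>] by auto
  qed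
  then show "exp (- (\<Sum>k=1..n. \<bar>\<beta> * y k + h\<bar>)) * renewal_delta T n \<omega> \<le> pinning_weight T \<beta> h n y \<omega>"
    "pinning_weight T \<beta> h n y \<omega> \<le> exp (\<Sum>k=1..n. \<bar>\<beta> * y k + h\<bar>)"
    using renewal_delta_cases[of T n \<omega>] unfolding pinning_weight_def by auto
qed

lemma pinning_weight_nonneg: "0 \<le> pinning_weight T \<beta> h n y \<omega>"
  using renewal_delta_cases[of T n \<omega>] by (auto simp: pinning_weight_def)

lemma borel_measurable_pinning_weight[measurable]:
  assumes [measurable]: "\<And>i. T i \<in> measurable M (count_space UNIV)"
  shows "pinning_weight T \<beta> h n y \<in> borel_measurable M"
  unfolding pinning_weight_def[abs_def] by measurable

lemma pinning_weight_update:
  assumes "k \<in> {1..n}"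
  shows "pinning_weight T \<beta> h n (y(k := v)) \<omega>
    = exp (\<beta> * (v - w) * renewal_delta T k \<omega>) * pinning_weight T \<beta> h n (y(k := w)) \<omega>"
proof -
  have "(\<Sum>j=1..n. (\<beta> * (y(k := u)) j + h) * renewal_delta T j \<omega>)
      = (\<beta> * u + h) * renewal_delta T k \<omega> + (\<Sum>j\<in>{1..n}-{k}. (\<beta> * y j + h) * renewal_delta T j \<omega>)" for u
    using assms by (subst sum.remove[of "{1..n}" k]) (auto intro!: sum.cong)
  then show ?thesis
    unfolding pinning_weight_def by (simp add: exp_add[symmetric] algebra_simps)
qed

context prob_space
begin

lemma integrable_pinning_weight:
  assumes [measurable]: "\<And>i. T i \<in> measurable M (count_space UNIV)"
  shows "integrable M (pinning_weight T \<beta> h n y)"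
proof (rule integrable_const_bound)
  show "AE \<omega> in M. norm (pinning_weight T \<beta> h n y \<omega>) \<le> exp (\<Sum>k=1..n. \<bar>\<beta> * y k + h\<bar>)"
    by (intro AE_I2) (metis abs_of_nonneg pinning_weight_bounds(2) pinning_weight_nonneg real_norm_def)
qed simp

lemma pinning_Z_pos:
  assumes [measurable]: "\<And>i. T i \<in> measurable M (count_space UNIV)"
    and hit: "measure M {\<omega> \<in> space M. \<exists>j. renewal_tau T j \<omega> = n} > 0"
  shows "pinning_Z M T \<eta> \<beta> h n x > 0"
proof -
  define H where "H = {\<omega> \<in> space M. \<exists>j. renewal_tau T j \<omega> = n}"
  define C where "C = (\<Sum>k=1..n. \<bar>\<beta> * \<eta> k x + h\<bar>)"
  have H_eq: "H = {\<omega> \<in> space M. renewal_delta T n \<omega> = 1}"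
    unfolding H_def renewal_delta_def by auto
  have [measurable]: "H \<in> sets M"
    unfolding H_eq by measurable
  have delta_H: "renewal_delta T n \<omega> = indicator H \<omega>" if "\<omega> \<in> space M" for \<omega>
    using that unfolding H_def renewal_delta_def by auto
  have "0 < exp (- C) * prob H"
    using hit unfolding H_def by simp
  also have "\<dots> = (\<integral>\<omega>. exp (- C) * indicator H \<omega> \<partial>M)"
    by simp
  also have "\<dots> \<le> (\<integral>\<omega>. pinning_weight T \<beta> h n (\<lambda>k. \<eta> k x) \<omega> \<partial>M)"
    using pinning_weight_bounds(1)[of \<beta> "\<lambda>k. \<eta> k x"] integrable_pinning_weight
    by (intro integral_mono) (auto simp: C_def less_top[symmetric] delta_H[symmetric])
  finally show ?thesis
    by (simp add: pinning_Z_eq_integral_weight)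
qed

lemma borel_measurable_pinning_Z:
  assumes [measurable]: "\<And>i. T i \<in> measurable M (count_space UNIV)" "\<And>k. \<eta> k \<in> borel_measurable N"
  shows "pinning_Z M T \<eta> \<beta> h n \<in> borel_measurable N"
proof -
  have "(\<lambda>(x, \<omega>). pinning_weight T \<beta> h n (\<lambda>k. \<eta> k x) \<omega>) \<in> borel_measurable (N \<Otimes>\<^sub>M M)"
    unfolding pinning_weight_def by measurable
  then show ?thesis
    using borel_measurable_lebesgue_integral[of "\<lambda>x. pinning_weight T \<beta> h n (\<lambda>k. \<eta> k x)" N]
    by (simp add: pinning_Z_eq_integral_weight[abs_def])
qed

lemma ln_pinning_Z_update_bounds:
  fixes \<beta> h :: real
  assumes [measurable]: "\<And>i. T i \<in> measurable M (count_space UNIV)"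
    and hit: "measure M {\<omega> \<in> space M. \<exists>j. renewal_tau T j \<omega> = n} > 0" and k: "k \<in> {1..n}"
  defines "Z \<equiv> pinning_Z M T (\<lambda>k y. y k) \<beta> h n"
  shows "min (\<beta> * (v - w)) 0 \<le> ln (Z (y(k := v))) - ln (Z (y(k := w)))"
    and "ln (Z (y(k := v))) - ln (Z (y(k := w))) \<le> max (\<beta> * (v - w)) 0"
proof -
  have Z_eq: "Z y = (\<integral>\<omega>. pinning_weight T \<beta> h n y \<omega> \<partial>M)" for y
    unfolding Z_def pinning_Z_eq_integral_weight by simp
  have Z_pos: "Z y > 0" for y
    unfolding Z_def using pinning_Z_pos[OF _ hit] by simp
  define W where "W u = pinning_weight T \<beta> h n (y(k := u))" for u
  have factor: "exp (min (\<beta> * (v - w)) 0) \<le> exp (\<beta> * (v - w) * renewal_delta T k \<omega>)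
      \<and> exp (\<beta> * (v - w) * renewal_delta T k \<omega>) \<le> exp (max (\<beta> * (v - w)) 0)" for \<omega>
    using renewal_delta_cases[of T k \<omega>] by auto
  have W_v: "W v \<omega> = exp (\<beta> * (v - w) * renewal_delta T k \<omega>) * W w \<omega>" for \<omega>
    unfolding W_def by (rule pinning_weight_update[OF k])
  have "exp (min (\<beta> * (v - w)) 0) * W w \<omega> \<le> W v \<omega>" "W v \<omega> \<le> exp (max (\<beta> * (v - w)) 0) * W w \<omega>" for \<omega>
    unfolding W_v using factor[of \<omega>] pinning_weight_nonneg[of T \<beta> h n "y(k := w)" \<omega>]
    by (simp_all add: W_def mult_right_mono)
  moreover have "integrable M (W u)" for u
    unfolding W_def by (rule integrable_pinning_weight) simp
  ultimately have "(\<integral>\<omega>. exp (min (\<beta> * (v - w)) 0) * W w \<omega> \<partial>M) \<le> (\<integral>\<omega>. W v \<omega> \<partial>M)"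
    "(\<integral>\<omega>. W v \<omega> \<partial>M) \<le> (\<integral>\<omega>. exp (max (\<beta> * (v - w)) 0) * W w \<omega> \<partial>M)"
    by (intro integral_mono; simp)+
  then have "exp (min (\<beta> * (v - w)) 0) * Z (y(k := w)) \<le> Z (y(k := v))"
      "Z (y(k := v)) \<le> exp (max (\<beta> * (v - w)) 0) * Z (y(k := w))"
    by (simp_all add: Z_eq W_def)
  then have "ln (exp (min (\<beta> * (v - w)) 0) * Z (y(k := w))) \<le> ln (Z (y(k := v)))"
      "ln (Z (y(k := v))) \<le> ln (exp (max (\<beta> * (v - w)) 0) * Z (y(k := w)))"
    using Z_pos[of "y(k := v)"] Z_pos[of "y(k := w)"] by (simp_all add: ln_le_cancel_iff)
  then show "min (\<beta> * (v - w)) 0 \<le> ln (Z (y(k := v))) - ln (Z (y(k := w)))"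
      "ln (Z (y(k := v))) - ln (Z (y(k := w))) \<le> max (\<beta> * (v - w)) 0"
    using Z_pos[of "y(k := w)"] by (simp_all add: ln_mult)
qed

end

lemma (in prob_space) distr_restrict_eq_PiM:
  fixes \<eta> :: "'i \<Rightarrow> 'a \<Rightarrow> real"
  assumes "indep_vars (\<lambda>_. borel) \<eta> UNIV" "\<And>k. distr M borel (\<eta> k) = distr M borel (\<eta> k0)" "I \<noteq> {}"
  shows "distr M (\<Pi>\<^sub>M i\<in>I. borel) (\<lambda>x. \<lambda>k\<in>I. \<eta> k x) = (\<Pi>\<^sub>M i\<in>I. distr M borel (\<eta> k0))"
proof -
  have "indep_vars (\<lambda>_. borel) \<eta> I"
    by (rule indep_vars_subset[OF assms(1)]) auto
  then have "distr M (\<Pi>\<^sub>M i\<in>I. borel) (\<lambda>x. \<lambda>k\<in>I. \<eta> k x) = (\<Pi>\<^sub>M i\<in>I. distr M borel (\<eta> i))"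
    using indep_vars_iff_distr_eq_PiM'[of I \<eta> "\<lambda>_. borel"] assms(1,3) by (simp add: indep_vars_def)
  also have "\<dots> = (\<Pi>\<^sub>M i\<in>I. distr M borel (\<eta> k0))"
    by (rule PiM_cong[OF refl assms(2)])
  finally show ?thesis .
qed

lemma borel_measurable_component_PiM:
  fixes \<mu> :: "'b::topological_space measure"
  assumes "sets \<mu> = sets borel"
  shows "(\<lambda>y. y k) \<in> borel_measurable (\<Pi>\<^sub>M i\<in>I. \<mu>)"
proof (cases "k \<in> I")
  case True
  then show ?thesis
    using measurable_component_singleton[OF True, of "\<lambda>_. \<mu>"] by (simp add: measurable_cong_sets[OF refl assms])
next
  case False
  then have "y k = undefined" if "y \<in> space (\<Pi>\<^sub>M i\<in>I. \<mu>)" for y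
    using that by (auto simp: space_PiM PiE_def extensional_def)
  then show ?thesis
    by (subst measurable_cong[where g = "\<lambda>_. undefined"]) auto
qed

lemma (in prob_space) coordinate_increments_between_ln_pinning_Z:
  fixes \<beta> h :: real
  assumes "\<And>i. T i \<in> measurable M (count_space UNIV)"
    and "measure M {\<omega> \<in> space M. \<exists>j. renewal_tau T j \<omega> = n} > 0" and "\<beta> \<noteq> 0"
  shows "coordinate_increments_between \<mu> (\<lambda>v. min (\<beta> * v + h) 0) (\<lambda>v. max (\<beta> * v + h) 0) (- h / \<beta>) {1..n}
      (\<lambda>y. ln (pinning_Z M T (\<lambda>k y. y k) \<beta> h n y))"
  using ln_pinning_Z_update_bounds[OF assms(1,2), where w="- h / \<beta>" and \<beta>=\<beta> and h=h] assms(3)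
  unfolding coordinate_increments_between_def by (simp add: algebra_simps)

lemma pinning_Z_restrict:
  "pinning_Z M T (\<lambda>k y. y k) \<beta> h n (restrict y {1..n}) = pinning_Z M T (\<lambda>k y. y k) \<beta> h n y"
  unfolding pinning_Z_def by (intro Bochner_Integration.integral_cong refl arg_cong2[where f="(*)"] arg_cong[where f=exp] sum.cong) auto

lemma log_pinning_Z_mgf_le:
  fixes M :: "'a measure" and T :: "nat \<Rightarrow> 'a \<Rightarrow> nat"
    and N :: "'b measure" and \<eta> :: "nat \<Rightarrow> 'b \<Rightarrow> real" and \<beta> h :: real
  assumes M: "prob_space M" and T[measurable]: "\<And>i. T i \<in> measurable M (count_space UNIV)"
    and N: "prob_space N"
    and eta_indep: "prob_space.indep_vars N (\<lambda>_. borel) \<eta> UNIV"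
    and eta_ident: "\<And>k. distr N borel (\<eta> k) = distr N borel (\<eta> 0)"
    and beta: "\<beta> > 0" and n: "n \<ge> 1"
    and hit: "measure M {\<omega> \<in> space M. \<exists>j. renewal_tau T j \<omega> = n} > 0"
    and iU: "integrable N (\<lambda>x. exp (max (\<beta> * \<eta> 0 x + h) 0))"
    and iL: "integrable N (\<lambda>x. exp (- min (\<beta> * \<eta> 0 x + h) 0))"
    and K: "(\<integral>x. exp (max (\<beta> * \<eta> 0 x + h) 0) \<partial>N) * (\<integral>x. exp (- min (\<beta> * \<eta> 0 x + h) 0) \<partial>N) - 1 \<le> K"
    and t: "\<bar>t\<bar> \<le> 1"
  defines "Z \<equiv> pinning_Z M T \<eta> \<beta> h n"
  shows "integrable N (\<lambda>x. ln (Z x))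
    \<and> (\<integral>\<^sup>+ x. ennreal (exp (t * (ln (Z x) - (\<integral>y. ln (Z y) \<partial>N)))) \<partial>N) \<le> ennreal (exp (real n * K * t\<^sup>2))"
proof -
  interpret M: prob_space M by (rule M)
  interpret N: prob_space N by (rule N)
  have [measurable]: "\<eta> k \<in> borel_measurable N" for k
    using eta_indep unfolding N.indep_vars_def by auto
  define \<mu> where "\<mu> = distr N borel (\<eta> 0)"
  interpret \<mu>: prob_space \<mu>
    unfolding \<mu>_def by (rule N.prob_space_distr) simp
  have sets_\<mu>: "sets \<mu> = sets borel" and space_\<mu>: "space \<mu> = UNIV"
    unfolding \<mu>_def by auto
  define I where "I = {1..n}"
  define F where "F y = ln (pinning_Z M T (\<lambda>k y. y k) \<beta> h n y)" for y
  define X where "X x = (\<lambda>k\<in>I. \<eta> k x)" for x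
  have X[measurable]: "X \<in> measurable N (\<Pi>\<^sub>M i\<in>I. borel)"
    unfolding X_def by measurable
  \<comment> \<open>By independence \<open>X\<close> has law \<open>\<Pi>\<^sub>M i\<in>I. \<mu>\<close>, and \<open>ln Z = F \<circ> X\<close>: everything transfers to the product space.\<close>
  have distr_X: "distr N (\<Pi>\<^sub>M i\<in>I. borel) X = (\<Pi>\<^sub>M i\<in>I. \<mu>)"
    unfolding X_def \<mu>_def using N.distr_restrict_eq_PiM[OF eta_indep eta_ident] n I_def by simp
  have F_meas[measurable]: "F \<in> borel_measurable (\<Pi>\<^sub>M i\<in>I. \<mu>)"
    unfolding F_def[abs_def]
    using M.borel_measurable_pinning_Z[OF T borel_measurable_component_PiM[OF sets_\<mu>]] by measurable
  have sets_PiM: "sets (\<Pi>\<^sub>M i\<in>I. \<mu>) = sets (\<Pi>\<^sub>M i\<in>I. borel :: real measure)"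
    by (rule sets_PiM_cong) (simp_all add: sets_\<mu>)
  have F_meas_borel[measurable]: "F \<in> borel_measurable (\<Pi>\<^sub>M i\<in>I. borel)"
    using F_meas by (simp add: measurable_cong_sets[OF sets_PiM refl])
  have ln_Z: "ln (Z x) = F (X x)" for x
    unfolding Z_def F_def X_def I_def pinning_Z_restrict by (simp add: pinning_Z_def)
  have integral_\<mu>: "(\<integral>v. f v \<partial>\<mu>) = (\<integral>x. f (\<eta> 0 x) \<partial>N)"
    and integrable_\<mu>: "integrable \<mu> f = integrable N (\<lambda>x. f (\<eta> 0 x))"
    if [measurable]: "f \<in> borel_measurable borel" for f :: "real \<Rightarrow> real"
    unfolding \<mu>_def by (simp_all add: integral_distr integrable_distr_eq)
  have "integrable \<mu> (\<lambda>v. exp (max (\<beta> * v + h) 0))" "integrable \<mu> (\<lambda>v. exp (- min (\<beta> * v + h) 0))"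
    using iU iL by (simp_all add: integrable_\<mu>)
  moreover have "exp (real n * ((\<integral>v. exp (max (\<beta> * v + h) 0) \<partial>\<mu>) * (\<integral>v. exp (- min (\<beta> * v + h) 0) \<partial>\<mu>) - 1) * t\<^sup>2)
      \<le> exp (real n * K * t\<^sup>2)"
    using K by (simp add: integral_\<mu> mult_left_mono mult_right_mono)
  moreover note \<mu>.centered_mgf_PiM_le[OF _ _ _ _ t F_meas
      M.coordinate_increments_between_ln_pinning_Z[OF T hit, of \<beta> \<mu> h, folded F_def[abs_def] I_def]]
  ultimately have "integrable (\<Pi>\<^sub>M i\<in>I. \<mu>) F
    \<and> (\<integral>\<^sup>+ y. ennreal (exp (t * (F y - (\<integral>y. F y \<partial>\<Pi>\<^sub>M i\<in>I. \<mu>)))) \<partial>\<Pi>\<^sub>M i\<in>I. \<mu>)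
        \<le> ennreal (exp (real n * K * t\<^sup>2))"
    using space_\<mu> beta by (auto simp: I_def intro: order.trans ennreal_leI)
  then show ?thesis
    unfolding ln_Z using integrable_distr_eq[OF X F_meas_borel] integral_distr[OF X F_meas_borel]
      nn_integral_distr[OF X] by (simp add: distr_X)
qed

theorem theorem1p1:
  fixes M :: "'a measure" and T :: "nat \<Rightarrow> 'a \<Rightarrow> nat"
    and N :: "'b measure" and \<eta> :: "nat \<Rightarrow> 'b \<Rightarrow> real"
    and \<beta> h :: real and n :: nat
  assumes M: "prob_space M"
    and T_indep: "prob_space.indep_vars M (\<lambda>_. count_space UNIV) T UNIV"
    and T_ident: "\<And>i. distr M (count_space UNIV) (T i) = distr M (count_space UNIV) (T 0)"
    and T_pos: "\<And>i \<omega>. \<omega> \<in> space M \<Longrightarrow> T i \<omega> > 0"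
    and N: "prob_space N"
    and eta_indep: "prob_space.indep_vars N (\<lambda>_. borel) \<eta> UNIV"
    and eta_ident: "\<And>k. distr N borel (\<eta> k) = distr N borel (\<eta> 0)"
    and beta: "\<beta> > 0"
    and expmom: "integrable N (\<lambda>x. exp (\<beta> * \<bar>\<eta> 0 x\<bar>))"
    and n: "n \<ge> 1"
    and hit: "measure M {\<omega> \<in> space M. \<exists>j. renewal_tau T j \<omega> = n} > 0"
  defines "K \<equiv> 2 * max (exp (h + ln (\<integral>x. exp (\<beta> * \<eta> 0 x) \<partial>N))) 1
                 * max (exp (- h + ln (\<integral>x. exp ((- \<beta>) * \<eta> 0 x) \<partial>N))) 1"
    and "Z \<equiv> pinning_Z M T \<eta> \<beta> h n"
  shows "integrable N (\<lambda>x. ln (Z x))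
    \<and> (\<forall>\<sigma>\<in>{1, -1::real}.
        (\<forall>t\<in>{0..1::real}.
           (\<integral>\<^sup>+ x. ennreal (exp (\<sigma> * t * (ln (Z x) - (\<integral>y. ln (Z y) \<partial>N)))) \<partial>N)
             \<le> ennreal (exp (real n * K * t\<^sup>2)))
      \<and> (\<forall>y::real. 0 < y \<and> y \<le> 2 * K \<longrightarrow>
           measure N {x \<in> space N. \<sigma> * (1 / real n) * (ln (Z x) - (\<integral>y. ln (Z y) \<partial>N)) > y}
             \<le> exp (- real n * y\<^sup>2 / (4 * K)))
      \<and> (\<forall>y::real. 2 * K < y \<longrightarrow>
           measure N {x \<in> space N. \<sigma> * (1 / real n) * (ln (Z x) - (\<integral>y. ln (Z y) \<partial>N)) > y}
             \<le> exp (- real n * (y - K))))"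
proof -
  interpret M: prob_space M by (rule M)
  interpret N: prob_space N by (rule N)
  have T_meas: "T i \<in> measurable M (count_space UNIV)" for i
    using T_indep unfolding M.indep_vars_def by auto
  have eta0_meas[measurable]: "\<eta> 0 \<in> borel_measurable N"
    using eta_indep unfolding N.indep_vars_def by auto
  note moments = N.exp_max_times_exp_neg_min_le[OF eta0_meas expmom less_imp_le[OF beta], of h]
  have K_pos: "K > 0"
    unfolding K_def by (simp add: max_def)
  have mgf: "integrable N (\<lambda>x. ln (Z x))
    \<and> (\<integral>\<^sup>+ x. ennreal (exp (\<tau> * (ln (Z x) - (\<integral>y. ln (Z y) \<partial>N)))) \<partial>N) \<le> ennreal (exp (real n * K * \<tau>\<^sup>2))"
    if "\<bar>\<tau>\<bar> \<le> 1" for \<tau>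
    unfolding Z_def K_def
    by (rule log_pinning_Z_mgf_le[OF M T_meas N eta_indep eta_ident beta n hit moments that])
  have d_meas: "(\<lambda>x. ln (Z x) - (\<integral>y. ln (Z y) \<partial>N)) \<in> borel_measurable N"
    using mgf[of 0] by (simp add: borel_measurable_integrable)
  have mgf_signed: "(\<integral>\<^sup>+ x. ennreal (exp (\<sigma> * t * (ln (Z x) - (\<integral>y. ln (Z y) \<partial>N)))) \<partial>N)
      \<le> ennreal (exp (real n * K * t\<^sup>2))" if "\<sigma> \<in> {1, -1}" "t \<in> {0..1}" for \<sigma> t
    using mgf[of "\<sigma> * t"] that by (auto simp: power_mult_distrib)
  have "real n > 0"
    using n by simp
  then show ?thesis
    using mgf[of 0]
    by (intro conjI ballI allI impI N.tail_bounds_of_mgf[OF d_meas _ K_pos] mgf_signed) auto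
qed

end
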